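(* Let $P$ be a finite set of points in the plane in general position with $|P|$ even, and suppose $P=A\sqcup B$ where each of $A$ and $B$ is a union of vertex sets of connected components of the underlying graph of $P$. Then every halving line of $P$ passing through two points of $A$ has exactly $|B|/2$ points of $B$ strictly on each side, and symmetrically every halving line of $P$ passing through two points of $B$ has exactly $|A|/2$ points of $A$ strictly on each side.
   Context: Points are in general position if no three are collinear. For a finite set $P$ of $n$ points in general position with $n$ even, a halving line of $P$ is a line through two points of $P$ that has exactly $(n-2)/2$ points of $P$ strictly on each side. The underlying graph of $P$ has vertex set $P$, and two points are adjacent if and only if the line through them is a halving line of $P$. *)

theory Defs
  imports "HOL-Analysis.Analysis"
begin

type_synonym point = "real \<times> real"

text \<open>Orientation (signed area) of the triple p, q, r; positive means r is strictly
  on the left of the directed line from p to q, negative strictly on the right.\<close>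
definition orient :: "point \<Rightarrow> point \<Rightarrow> point \<Rightarrow> real" where
  "orient p q r = (fst q - fst p) * (snd r - snd p)
                   - (snd q - snd p) * (fst r - fst p)"

definition collinear3 :: "point \<Rightarrow> point \<Rightarrow> point \<Rightarrow> bool" where
  "collinear3 p q r \<longleftrightarrow> orient p q r = 0"

definition general_position :: "point set \<Rightarrow> bool" where
  "general_position P \<longleftrightarrow>
     (\<forall>p\<in>P. \<forall>q\<in>P. \<forall>r\<in>P. p \<noteq> q \<and> q \<noteq> r \<and> p \<noteq> r \<longrightarrow> \<not> collinear3 p q r)"

definition left_side :: "point \<Rightarrow> point \<Rightarrow> point set \<Rightarrow> point set" where
  "left_side p q S = {r \<in> S. orient p q r > 0}"

definition right_side :: "point \<Rightarrow> point \<Rightarrow> point set \<Rightarrow> point set" where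
  "right_side p q S = {r \<in> S. orient p q r < 0}"

definition halving_line :: "point set \<Rightarrow> point \<Rightarrow> point \<Rightarrow> bool" where
  "halving_line P p q \<longleftrightarrow> p \<in> P \<and> q \<in> P \<and> p \<noteq> q \<and>
     2 * card (left_side p q P) + 2 = card P \<and> 2 * card (right_side p q P) + 2 = card P"

text \<open>Edge relation of the underlying graph of P.\<close>
definition halving_edges :: "point set \<Rightarrow> (point \<times> point) set" where
  "halving_edges P = {(p, q). halving_line P p q}"

definition component :: "point set \<Rightarrow> point \<Rightarrow> point set" where
  "component P v = {w \<in> P. (v, w) \<in> (halving_edges P)\<^sup>*}"

definition union_of_components :: "point set \<Rightarrow> point set \<Rightarrow> bool" where
  "union_of_components P A \<longleftrightarrow> (\<exists>V \<subseteq> P. A = (\<Union>v\<in>V. component P v))"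

end

theory Submission
  imports Defs
begin

text \<open>Sweep a direction u once around the half circle, starting perpendicular to the
  halving line through a, a' \<in> A. Ordering P by the height cross u, each point of B gets
  sign +1 or -1 according to whether it lies in the upper or lower half of P, and we sum
  these signs over B. The sum can only change when two points swap places at the median,
  i.e. when the direction passes a halving line of P; but the two endpoints of a halving
  line lie in the same component, hence both or neither in B, and their two contributions
  cancel both before and after the swap. So the sum is constant, while reversing u negates
  it; hence it vanishes. In the starting direction it counts the points of B to the left of
  the line minus those to the right.\<close>

section \<open>Halves of a finite set ordered by a height function\<close>

definition strictly_above :: "'a set \<Rightarrow> ('a \<Rightarrow> real) \<Rightarrow> 'a \<Rightarrow> 'a set" where
  "strictly_above P h r = {x \<in> P. h r < h x}"

definition strictly_below :: "'a set \<Rightarrow> ('a \<Rightarrow> real) \<Rightarrow> 'a \<Rightarrow> 'a set" where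
  "strictly_below P h r = {x \<in> P. h x < h r}"

text \<open>For card P even and at most two points on each level of h, this is +1 on the upper
  half of P, -1 on the lower half, and 0 exactly on the two points of a median tie.\<close>

definition half_sign :: "'a set \<Rightarrow> ('a \<Rightarrow> real) \<Rightarrow> 'a \<Rightarrow> int" where
  "half_sign P h r =
     (if 2 * card (strictly_above P h r) < card P then 1 else 0)
   - (if 2 * card (strictly_below P h r) < card P then 1 else 0)"

definition order_refines :: "'a set \<Rightarrow> ('a \<Rightarrow> real) \<Rightarrow> ('a \<Rightarrow> real) \<Rightarrow> bool" where
  "order_refines P h h' \<longleftrightarrow> (\<forall>x\<in>P. \<forall>y\<in>P. h x < h y \<longrightarrow> h' x < h' y)"

definition no_triple_ties :: "'a set \<Rightarrow> ('a \<Rightarrow> real) \<Rightarrow> bool" where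
  "no_triple_ties P h \<longleftrightarrow>
     (\<forall>r\<in>P. \<forall>x\<in>P. \<forall>y\<in>P. x \<noteq> r \<and> y \<noteq> r \<and> h x = h r \<and> h y = h r \<longrightarrow> x = y)"

definition median_tie :: "'a set \<Rightarrow> ('a \<Rightarrow> real) \<Rightarrow> 'a \<Rightarrow> 'a \<Rightarrow> bool" where
  "median_tie P h p q \<longleftrightarrow> p \<in> P \<and> q \<in> P \<and> p \<noteq> q \<and> h p = h q \<and>
     2 * card (strictly_above P h p) + 2 = card P \<and> 2 * card (strictly_below P h p) + 2 = card P"

lemma strictly_above_uminus: "strictly_above P (\<lambda>x. - h x) r = strictly_below P h r"
  and strictly_below_uminus: "strictly_below P (\<lambda>x. - h x) r = strictly_above P h r"
  unfolding strictly_above_def strictly_below_def by auto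

lemma half_sign_uminus: "half_sign P (\<lambda>x. - h x) r = - half_sign P h r"
  unfolding half_sign_def strictly_above_uminus strictly_below_uminus by simp

lemma median_tie_uminus: "median_tie P (\<lambda>x. - h x) p q \<longleftrightarrow> median_tie P h p q"
  unfolding median_tie_def strictly_above_uminus strictly_below_uminus by auto

lemma median_tie_sym: "median_tie P h p q \<Longrightarrow> median_tie P h q p"
  unfolding median_tie_def strictly_above_def strictly_below_def by auto

lemma strictly_above_refine:
  assumes "order_refines P h h'" and "r \<in> P"
  shows "strictly_above P h' r = strictly_above P h r \<union> {x \<in> P. h x = h r \<and> h' r < h' x}"
  using assms unfolding order_refines_def strictly_above_def
  by (auto simp: not_less_iff_gr_or_eq) (meson less_asym)

lemma strictly_below_refine:
  assumes "order_refines P h h'" and "r \<in> P"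
  shows "strictly_below P h' r = strictly_below P h r \<union> {x \<in> P. h x = h r \<and> h' x < h' r}"
  using assms unfolding order_refines_def strictly_below_def
  by (auto simp: not_less_iff_gr_or_eq) (meson less_asym)

lemma card_strictly_above_add_below:
  assumes fin: "finite P" and ties: "no_triple_ties P h"
    and r: "r \<in> P" and x: "x \<in> P" "x \<noteq> r" "h x = h r"
  shows "card (strictly_above P h r) + card (strictly_below P h r) + 2 = card P"
proof -
  have level: "y = r \<or> y = x" if "y \<in> P" "h y = h r" for y
    using ties r x that unfolding no_triple_ties_def by blast
  have "P = strictly_above P h r \<union> strictly_below P h r \<union> {r, x}"
  proof
    show "P \<subseteq> strictly_above P h r \<union> strictly_below P h r \<union> {r, x}"
    proof
      fix y assume "y \<in> P"
      then show "y \<in> strictly_above P h r \<union> strictly_below P h r \<union> {r, x}"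
        using level[of y] linorder_less_linear[of "h r" "h y"]
        unfolding strictly_above_def strictly_below_def by auto
    qed
  qed (use r x in \<open>auto simp: strictly_above_def strictly_below_def\<close>)
  moreover have "finite (strictly_above P h r)" "finite (strictly_below P h r)"
    using fin by (simp_all add: strictly_above_def strictly_below_def)
  moreover have "strictly_above P h r \<inter> strictly_below P h r = {}"
    and "(strictly_above P h r \<union> strictly_below P h r) \<inter> {r, x} = {}"
    using x(3) by (auto simp: strictly_above_def strictly_below_def)
  ultimately show ?thesis
    using x(2) by (metis card_Un_disjoint card_2_iff finite.emptyI finite.insertI
        finite_UnI add.commute)
qed

lemma card_strictly_below_tie_le:
  assumes fin: "finite P" and pq: "p \<in> P" "q \<in> P" "p \<noteq> q" "h p = h q" and "h p < h r"
  shows "card (strictly_below P h p) + 2 \<le> card (strictly_below P h r)"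
proof -
  have sub: "insert p (insert q (strictly_below P h p)) \<subseteq> strictly_below P h r"
    using pq assms(6) unfolding strictly_below_def by auto
  have "finite (strictly_below P h r)"
    using fin by (simp add: strictly_below_def)
  then have "card (insert p (insert q (strictly_below P h p))) \<le> card (strictly_below P h r)"
    using sub by (rule card_mono)
  moreover have "finite (strictly_below P h p)" "p \<notin> strictly_below P h p"
    "q \<notin> strictly_below P h p"
    using fin pq(4) by (simp_all add: strictly_below_def)
  ultimately show ?thesis using pq(3) by simp
qed

lemma card_strictly_above_tie_le:
  assumes "finite P" "p \<in> P" "q \<in> P" "p \<noteq> q" "h p = h q" "h r < h p"
  shows "card (strictly_above P h p) + 2 \<le> card (strictly_above P h r)"
  using card_strictly_below_tie_le[of P p q "\<lambda>x. - h x" r] assms by (simp add: strictly_below_uminus)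

lemma half_sign_above_median_tie:
  assumes "finite P" "median_tie P h p q" "h p < h r"
  shows "half_sign P h r = 1"
proof -
  have "strictly_above P h r \<subseteq> strictly_above P h p"
    using assms(3) unfolding strictly_above_def by auto
  then have "card (strictly_above P h r) \<le> card (strictly_above P h p)"
    using assms(1) by (intro card_mono) (simp_all add: strictly_above_def)
  moreover have "card (strictly_below P h p) + 2 \<le> card (strictly_below P h r)"
    using assms(1,2,3) unfolding median_tie_def by (intro card_strictly_below_tie_le) auto
  ultimately show ?thesis using assms(2) unfolding half_sign_def median_tie_def by auto
qed

lemma half_sign_below_median_tie:
  assumes "finite P" "median_tie P h p q" "h r < h p"
  shows "half_sign P h r = - 1"
  using half_sign_above_median_tie[of P "\<lambda>x. - h x" p q r] assms
  by (simp add: median_tie_uminus half_sign_uminus)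

lemma median_tie_unique:
  assumes "finite P" "no_triple_ties P h" "median_tie P h p q" "median_tie P h r x"
  shows "r = p \<or> r = q"
proof -
  have False if "h p < h r"
    using card_strictly_below_tie_le[of P p q h r] assms(1,3,4) that
    unfolding median_tie_def by auto
  moreover have False if "h r < h p"
    using card_strictly_above_tie_le[of P p q h r] assms(1,3,4) that
    unfolding median_tie_def by auto
  moreover have "r = p \<or> r = q" if "h r = h p"
    using assms(2-4) that unfolding no_triple_ties_def median_tie_def by metis
  ultimately show ?thesis by (meson linorder_neqE_linordered_idom)
qed

lemma parity_threshold:
  fixes a c N :: nat
  assumes "even N" "2 * a + 2 \<noteq> N" "a \<le> c" "c \<le> a + 1"
  shows "2 * c < N \<longleftrightarrow> 2 * a < N"
  using assms by (auto elim!: evenE)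

lemma half_sign_refine_eq:
  assumes fin: "finite P" and ev: "even (card P)" and ref: "order_refines P h h'"
    and ties: "no_triple_ties P h" and r: "r \<in> P"
    and unbroken: "\<forall>x\<in>P. median_tie P h r x \<longrightarrow> h' x = h' r"
  shows "half_sign P h' r = half_sign P h r"
proof (cases "\<exists>x\<in>P. h x = h r \<and> h' x \<noteq> h' r")
  case False
  then have no_up: "{x \<in> P. h x = h r \<and> h' r < h' x} = {}"
    and no_down: "{x \<in> P. h x = h r \<and> h' x < h' r} = {}"
    by auto
  show ?thesis
    unfolding half_sign_def strictly_above_refine[OF ref r] strictly_below_refine[OF ref r]
      no_up no_down by simp
next
  case True
  then obtain x where x: "x \<in> P" "h x = h r" "h' x \<noteq> h' r" by blast
  then have "x \<noteq> r" by auto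
  let ?a = "card (strictly_above P h r)" and ?b = "card (strictly_below P h r)"
  have sum: "?a + ?b + 2 = card P"
    using card_strictly_above_add_below[OF fin ties r x(1) \<open>x \<noteq> r\<close> x(2)] .
  have "\<not> median_tie P h r x" using unbroken x by auto
  then have "\<not> (2 * ?a + 2 = card P \<and> 2 * ?b + 2 = card P)"
    using r x \<open>x \<noteq> r\<close> unfolding median_tie_def by auto
  then have a: "2 * ?a + 2 \<noteq> card P" and b: "2 * ?b + 2 \<noteq> card P"
    using sum by linarith+
  have level: "y = x" if "y \<in> P" "y \<noteq> r" "h y = h r" for y
    using ties r x \<open>x \<noteq> r\<close> that unfolding no_triple_ties_def by metis
  have up: "{y \<in> P. h y = h r \<and> h' r < h' y} \<subseteq> {x}"
    and down: "{y \<in> P. h y = h r \<and> h' y < h' r} \<subseteq> {x}"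
    using level by auto
  txt \<open>Breaking the tie of r with x shifts either count by at most one, and since
    card P is even such a shift crosses the threshold only at the median.\<close>
  have card_extend: "card S \<le> card (S \<union> T) \<and> card (S \<union> T) \<le> card S + 1"
    if "S \<subseteq> P" "T \<subseteq> {x}" for S T
  proof -
    have "finite S" using fin that(1) by (rule rev_finite_subset)
    moreover have "finite T" "card T \<le> 1"
      using finite_subset[OF that(2)] card_mono[OF _ that(2)] by simp_all
    ultimately show ?thesis using card_Un_le[of S T] by (simp add: card_mono)
  qed
  have "2 * card (strictly_above P h' r) < card P \<longleftrightarrow> 2 * ?a < card P"
    unfolding strictly_above_refine[OF ref r]
    by (rule parity_threshold[OF ev a])
      (use card_extend[OF _ up] in \<open>simp_all add: strictly_above_def\<close>)
  moreover have "2 * card (strictly_below P h' r) < card P \<longleftrightarrow> 2 * ?b < card P"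
    unfolding strictly_below_refine[OF ref r]
    by (rule parity_threshold[OF ev b])
      (use card_extend[OF _ down] in \<open>simp_all add: strictly_below_def\<close>)
  ultimately show ?thesis unfolding half_sign_def by simp
qed

lemma order_refines_uminus:
  "order_refines P (\<lambda>x. - h x) (\<lambda>x. - h' x) \<longleftrightarrow> order_refines P h h'"
  unfolding order_refines_def by auto

lemma no_triple_ties_uminus: "no_triple_ties P (\<lambda>x. - h x) \<longleftrightarrow> no_triple_ties P h"
  unfolding no_triple_ties_def by auto

lemma half_sign_lower_of_broken_median_tie:
  assumes fin: "finite P" and ref: "order_refines P h h'" and ties: "no_triple_ties P h"
    and med: "median_tie P h p q" and lt: "h' p < h' q"
  shows "half_sign P h' p = - 1"
proof -
  have p: "p \<in> P" and q: "q \<in> P" and pq: "p \<noteq> q" "h p = h q"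
    using med unfolding median_tie_def by auto
  have partner: "y = q" if "y \<in> P" "y \<noteq> p" "h y = h p" for y
    using ties p q pq that unfolding no_triple_ties_def by metis
  have "{x \<in> P. h x = h p \<and> h' p < h' x} = {q}"
    using partner q pq lt by auto
  moreover have "{x \<in> P. h x = h p \<and> h' x < h' p} = {}"
    using partner lt by (auto dest: less_asym)
  ultimately have "strictly_above P h' p = insert q (strictly_above P h p)"
    and below: "strictly_below P h' p = strictly_below P h p"
    unfolding strictly_above_refine[OF ref p] strictly_below_refine[OF ref p] by auto
  moreover have "q \<notin> strictly_above P h p" "finite (strictly_above P h p)"
    using fin pq by (simp_all add: strictly_above_def)
  ultimately have "card (strictly_above P h' p) = card (strictly_above P h p) + 1"
    by simp
  then have "\<not> 2 * card (strictly_above P h' p) < card P"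
    and "2 * card (strictly_below P h' p) < card P"
    using med unfolding below median_tie_def by linarith+
  then show ?thesis unfolding half_sign_def by simp
qed

lemma half_sign_upper_of_broken_median_tie:
  assumes "finite P" "order_refines P h h'" "no_triple_ties P h"
    and "median_tie P h p q" "h' p < h' q"
  shows "half_sign P h' q = 1"
  using half_sign_lower_of_broken_median_tie[of P "\<lambda>x. - h x" "\<lambda>x. - h' x" q p] assms
  by (simp add: order_refines_uminus no_triple_ties_uminus median_tie_uminus median_tie_sym
      half_sign_uminus)

lemma half_sign_median_tie: "median_tie P h p q \<Longrightarrow> half_sign P h p = 0"
  unfolding median_tie_def half_sign_def by simp

lemma sum_half_sign_refine:
  assumes fin: "finite P" and ev: "even (card P)" and ref: "order_refines P h h'"
    and ties: "no_triple_ties P h" and B: "B \<subseteq> P"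
    and sep: "\<And>p q. median_tie P h p q \<Longrightarrow> p \<in> B \<longleftrightarrow> q \<in> B"
  shows "(\<Sum>r\<in>B. half_sign P h' r) = (\<Sum>r\<in>B. half_sign P h r)"
proof (cases "\<exists>p q. median_tie P h p q \<and> h' p < h' q")
  case False
  have "\<forall>x\<in>P. median_tie P h r x \<longrightarrow> h' x = h' r" for r
    using False median_tie_sym by (metis linorder_neqE_linordered_idom)
  then show ?thesis
    using half_sign_refine_eq[OF fin ev ref ties] B by (intro sum.cong) auto
next
  case True
  then obtain p q where med: "median_tie P h p q" and lt: "h' p < h' q" by blast
  then have pq: "p \<in> P" "q \<in> P" "p \<noteq> q" unfolding median_tie_def by auto
  have rest: "half_sign P h' r = half_sign P h r" if "r \<in> P" "r \<notin> {p, q}" for r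
    using that median_tie_unique[OF fin ties med]
    by (intro half_sign_refine_eq[OF fin ev ref ties]) auto
  have pair: "half_sign P h' p + half_sign P h' q = half_sign P h p + half_sign P h q"
    using half_sign_lower_of_broken_median_tie[OF fin ref ties med lt]
      half_sign_upper_of_broken_median_tie[OF fin ref ties med lt]
      half_sign_median_tie[OF med] half_sign_median_tie[OF median_tie_sym[OF med]]
    by simp
  have finB: "finite B" using fin B by (rule finite_subset[rotated])
  show ?thesis
  proof (cases "p \<in> B")
    case True
    then have sub: "{p, q} \<subseteq> B" using sep[OF med] by simp
    have "(\<Sum>r\<in>B - {p, q}. half_sign P h' r) = (\<Sum>r\<in>B - {p, q}. half_sign P h r)"
      using rest B by (intro sum.cong) auto
    then show ?thesis
      unfolding sum.subset_diff[OF sub finB] using pq pair by simp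
  next
    case False
    then have "q \<notin> B" using sep[OF med] by simp
    then show ?thesis using False rest B by (intro sum.cong) auto
  qed
qed

lemma eventually_order_refines:
  fixes H :: "'b::t2_space \<Rightarrow> 'a \<Rightarrow> real"
  assumes fin: "finite P" and cont: "\<And>x. x \<in> P \<Longrightarrow> isCont (\<lambda>s. H s x) t"
  shows "eventually (\<lambda>s. order_refines P (H t) (H s)) (at t)"
proof -
  have "eventually (\<lambda>s. H t x < H t y \<longrightarrow> H s x < H s y) (at t)" if "x \<in> P" "y \<in> P" for x y
  proof (cases "H t x < H t y")
    case True
    have "((\<lambda>s. H s y - H s x) \<longlongrightarrow> H t y - H t x) (at t)"
      using cont[OF that(1)] cont[OF that(2)] unfolding isCont_def by (intro tendsto_intros)
    then have "eventually (\<lambda>s. 0 < H s y - H s x) (at t)"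
      by (rule order_tendstoD(1)) (use True in simp)
    then show ?thesis by (rule eventually_mono) simp
  qed simp
  then show ?thesis
    unfolding order_refines_def using fin by (simp add: eventually_ball_finite)
qed

lemma sum_half_sign_constant:
  fixes H :: "real \<Rightarrow> 'a \<Rightarrow> real"
  assumes fin: "finite P" and ev: "even (card P)" and B: "B \<subseteq> P"
    and cont: "\<And>t x. x \<in> P \<Longrightarrow> isCont (\<lambda>s. H s x) t"
    and ties: "\<And>t. no_triple_ties P (H t)"
    and sep: "\<And>t p q. median_tie P (H t) p q \<Longrightarrow> p \<in> B \<longleftrightarrow> q \<in> B"
  shows "(\<Sum>r\<in>B. half_sign P (H s) r) = (\<Sum>r\<in>B. half_sign P (H t) r)"
proof (rule connected_local_const[OF connected_UNIV UNIV_I UNIV_I, rule_format])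
  fix t :: real
  have "eventually (\<lambda>s. order_refines P (H t) (H s)) (at t)"
    using fin cont by (rule eventually_order_refines)
  then show "eventually (\<lambda>s. (\<Sum>r\<in>B. half_sign P (H t) r) = (\<Sum>r\<in>B. half_sign P (H s) r))
          (at t within UNIV)"
    by (rule eventually_mono) (rule sum_half_sign_refine[OF fin ev _ ties B sep, symmetric])
qed

section \<open>Heights perpendicular to a direction in the plane\<close>

definition cross :: "point \<Rightarrow> point \<Rightarrow> real" where
  "cross u v = fst u * snd v - snd u * fst v"

lemma inner_point: "inner u v = fst u * fst v + snd u * snd v"
  by (simp add: inner_prod_def)

lemma cross_diff_right: "cross u (v - w) = cross u v - cross u w"
  unfolding cross_def by (simp add: algebra_simps)

lemma cross_uminus_left: "cross (- u) v = - cross u v"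
  unfolding cross_def by simp

lemma orient_eq_cross: "orient p q r = cross (q - p) (r - p)"
  unfolding orient_def cross_def by simp

lemma cross_binet_cauchy: "inner u u * cross v w = inner u v * cross u w - inner u w * cross u v"
  unfolding cross_def inner_point by (simp add: algebra_simps power2_eq_square)

lemma cross_lagrange: "inner u u * inner v v = (inner u v)\<^sup>2 + (cross u v)\<^sup>2"
  unfolding cross_def inner_point by (simp add: algebra_simps power2_eq_square)

lemma orient_of_cross_tie:
  assumes "cross u p = cross u q"
  shows "inner u u * orient p q r = inner u (q - p) * (cross u r - cross u p)"
  using cross_binet_cauchy[of u "q - p" "r - p"] assms
  by (simp add: orient_eq_cross cross_diff_right)

lemma no_triple_ties_cross:
  assumes gp: "general_position P" and u: "u \<noteq> 0"
  shows "no_triple_ties P (cross u)"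
  unfolding no_triple_ties_def
proof (intro ballI impI)
  fix r x y assume "r \<in> P" "x \<in> P" "y \<in> P"
    and tie: "x \<noteq> r \<and> y \<noteq> r \<and> cross u x = cross u r \<and> cross u y = cross u r"
  have "inner u u * orient r x y = 0"
    using orient_of_cross_tie[of u r x y] tie by simp
  then have "collinear3 r x y" using u by (simp add: collinear3_def)
  then show "x = y"
    using gp[unfolded general_position_def] \<open>r \<in> P\<close> \<open>x \<in> P\<close> \<open>y \<in> P\<close> tie by metis
qed

lemma sides_of_scaled_height:
  assumes "0 < k" and "\<And>r. orient p q r = k * (h r - h p)"
  shows "left_side p q S = strictly_above S h p" and "right_side p q S = strictly_below S h p"
  using assms unfolding left_side_def right_side_def strictly_above_def strictly_below_def
  by (auto simp: zero_less_mult_iff mult_less_0_iff)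

lemma halving_line_iff_median_tie:
  assumes k: "0 < k" and orient: "\<And>r. orient p q r = k * (h r - h p)"
  shows "halving_line P p q \<longleftrightarrow> median_tie P h p q"
proof -
  have "k * (h q - h p) = 0" using orient[of q] by (simp add: orient_def)
  then have "h p = h q" using k by simp
  then show ?thesis
    unfolding halving_line_def median_tie_def sides_of_scaled_height[OF k orient] by auto
qed

lemma halving_line_of_median_tie_cross:
  assumes u: "u \<noteq> 0" and med: "median_tie P (cross u) p q"
  shows "halving_line P p q"
proof -
  define c where "c = inner u (q - p)"
  have tie: "cross u p = cross u q" and "p \<noteq> q" using med unfolding median_tie_def by auto
  have uu: "0 < inner u u" using u by simp
  have orient: "orient p q r = (c / inner u u) * (cross u r - cross u p)" for r
    using orient_of_cross_tie[OF tie, of r] uu unfolding c_def by (simp add: field_simps)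
  have "cross u (q - p) = 0" using tie by (simp add: cross_diff_right)
  then have "inner u u * inner (q - p) (q - p) = c\<^sup>2"
    using cross_lagrange[of u "q - p"] unfolding c_def by simp
  then have "c \<noteq> 0" using uu \<open>p \<noteq> q\<close> by auto
  then consider "0 < c" | "c < 0" by linarith
  then show ?thesis
  proof cases
    case 1
    then show ?thesis using med orient uu
      by (subst halving_line_iff_median_tie[of "c / inner u u"]) auto
  next
    case 2
    have "orient p q r = (- c / inner u u) * (- cross u r - - cross u p)" for r
      using orient[of r] by (simp add: algebra_simps)
    then show ?thesis using med 2 uu median_tie_uminus[of P "cross u"]
      by (subst halving_line_iff_median_tie[of "- c / inner u u" _ _ "\<lambda>x. - cross u x"])
        (auto simp: divide_neg_pos)
  qed
qed

lemma median_tie_of_halving_line: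
  "halving_line P a a' \<Longrightarrow> median_tie P (cross (a' - a)) a a'"
  using halving_line_iff_median_tie[of 1 a a' "cross (a' - a)" P]
  by (simp add: orient_eq_cross cross_diff_right)

definition rotation :: "real \<Rightarrow> point \<Rightarrow> point" where
  "rotation t d = (cos t * fst d - sin t * snd d, sin t * fst d + cos t * snd d)"

lemma rotation_0 [simp]: "rotation 0 d = d"
  unfolding rotation_def by simp

lemma rotation_pi [simp]: "rotation pi d = - d"
  unfolding rotation_def by (simp add: prod_eq_iff)

lemma inner_rotation: "inner (rotation t d) (rotation t d) = inner d d"
proof -
  have "(c * a - s * b) * (c * a - s * b) + (s * a + c * b) * (s * a + c * b)
          = (c * c + s * s) * (a * a + b * b)" for a b c s :: real
    by (simp add: algebra_simps)
  then show ?thesis unfolding rotation_def inner_point by simp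
qed

lemma rotation_eq_0_iff [simp]: "rotation t d = 0 \<longleftrightarrow> d = 0"
  using inner_rotation[of t d] by (metis inner_eq_zero_iff)

lemma isCont_cross_rotation: "isCont (\<lambda>s. cross (rotation s d) r) t"
  unfolding cross_def rotation_def by (intro continuous_intros)

section \<open>Halving lines and the components of the halving graph\<close>

lemma orient_swap: "orient q p r = - orient p q r"
  unfolding orient_def by (simp add: algebra_simps)

lemma left_side_swap: "left_side q p S = right_side p q S"
  unfolding left_side_def right_side_def orient_swap[of q p] by auto

lemma right_side_swap: "right_side q p S = left_side p q S"
  unfolding left_side_def right_side_def orient_swap[of q p] by auto

lemma halving_line_sym: "halving_line P p q \<Longrightarrow> halving_line P q p"
  unfolding halving_line_def left_side_swap[of q p] right_side_swap[of q p] by auto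

lemma union_of_components_halving_closed:
  assumes "union_of_components P A" and hl: "halving_line P p q" and "p \<in> A"
  shows "q \<in> A"
proof -
  obtain V where "A = (\<Union>v\<in>V. component P v)"
    using assms(1) unfolding union_of_components_def by blast
  then obtain v where "v \<in> V" and "p \<in> component P v" and sub: "component P v \<subseteq> A"
    using \<open>p \<in> A\<close> by blast
  then have "(v, p) \<in> (halving_edges P)\<^sup>*" unfolding component_def by simp
  moreover have "(p, q) \<in> halving_edges P" using hl unfolding halving_edges_def by simp
  ultimately have "(v, q) \<in> (halving_edges P)\<^sup>*" by simp
  moreover have "q \<in> P" using hl unfolding halving_line_def by simp
  ultimately show ?thesis using sub unfolding component_def by blast
qed

lemma side_partition:
  assumes gp: "general_position P" and pq: "p \<in> P" "q \<in> P" "p \<noteq> q"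
    and S: "S \<subseteq> P - {p, q}"
  shows "S = left_side p q S \<union> right_side p q S"
proof -
  have "orient p q r \<noteq> 0" if "r \<in> S" for r
    using gp[unfolded general_position_def, rule_format, of p q r] pq that S
    unfolding collinear3_def by auto
  then show ?thesis unfolding left_side_def right_side_def by force
qed

lemma card_left_add_right_side:
  assumes "finite S" "general_position P" "p \<in> P" "q \<in> P" "p \<noteq> q" "S \<subseteq> P - {p, q}"
  shows "card (left_side p q S) + card (right_side p q S) = card S"
proof -
  have "card (left_side p q S \<union> right_side p q S)
          = card (left_side p q S) + card (right_side p q S)"
    using assms(1) by (intro card_Un_disjoint) (auto simp: left_side_def right_side_def)
  then show ?thesis using side_partition[OF assms(2-6)] by simp
qed

lemma sum_half_sign_halving_line:
  assumes fin: "finite P" and gp: "general_position P" and hl: "halving_line P a a'"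
    and B: "B \<subseteq> P - {a, a'}"
  shows "(\<Sum>r\<in>B. half_sign P (cross (a' - a)) r)
           = int (card (left_side a a' B)) - int (card (right_side a a' B))"
proof -
  have aa': "a \<in> P" "a' \<in> P" "a \<noteq> a'" using hl unfolding halving_line_def by auto
  have med: "median_tie P (cross (a' - a)) a a'"
    using median_tie_of_halving_line[OF hl] .
  have orient: "orient a a' r = cross (a' - a) r - cross (a' - a) a" for r
    by (simp add: orient_eq_cross cross_diff_right)
  have "finite B" using finite_subset[OF B] fin by simp
  then have "(\<Sum>r\<in>B. half_sign P (cross (a' - a)) r)
            = (\<Sum>r\<in>left_side a a' B. half_sign P (cross (a' - a)) r)
            + (\<Sum>r\<in>right_side a a' B. half_sign P (cross (a' - a)) r)"
    using side_partition[OF gp aa' B]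
    by (subst sum.union_disjoint[symmetric]) (auto simp: left_side_def right_side_def)
  also have "\<dots> = (\<Sum>r\<in>left_side a a' B. 1) + (\<Sum>r\<in>right_side a a' B. - 1)"
    using half_sign_above_median_tie[OF fin med] half_sign_below_median_tie[OF fin med]
    by (intro arg_cong2[where f = "(+)"] sum.cong) (auto simp: left_side_def right_side_def orient)
  finally show ?thesis by simp
qed

lemma halving_line_bisects_complement:
  assumes fin: "finite P" and gp: "general_position P" and ev: "even (card P)"
    and A: "union_of_components P A" and a: "a \<in> A" "a' \<in> A" and hl: "halving_line P a a'"
  shows "card (left_side a a' (P - A)) = card (right_side a a' (P - A))"
proof -
  define B where "B = P - A"
  define H where "H t = cross (rotation t (a' - a))" for t
  have "a' \<noteq> a" using hl unfolding halving_line_def by auto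
  then have dir: "rotation t (a' - a) \<noteq> 0" for t by simp
  have sep: "p \<in> B \<longleftrightarrow> q \<in> B" if "median_tie P (H t) p q" for t p q
  proof -
    have "halving_line P p q"
      using that dir unfolding H_def by (rule halving_line_of_median_tie_cross[rotated])
    then have "p \<in> A \<longleftrightarrow> q \<in> A"
      using union_of_components_halving_closed[OF A] halving_line_sym by blast
    moreover have "p \<in> P" "q \<in> P" using that unfolding median_tie_def by auto
    ultimately show ?thesis unfolding B_def by blast
  qed
  have "(\<Sum>r\<in>B. half_sign P (H pi) r) = (\<Sum>r\<in>B. half_sign P (H 0) r)"
    using fin ev _ isCont_cross_rotation no_triple_ties_cross[OF gp dir] sep
    unfolding H_def B_def by (rule sum_half_sign_constant) auto
  moreover have "H pi = (\<lambda>r. - H 0 r)"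
    unfolding H_def fun_eq_iff rotation_pi cross_uminus_left by simp
  ultimately have "(\<Sum>r\<in>B. half_sign P (H 0) r) = 0"
    by (simp add: half_sign_uminus sum_negf)
  moreover have "B \<subseteq> P - {a, a'}" unfolding B_def using a by auto
  ultimately show ?thesis
    using sum_half_sign_halving_line[OF fin gp hl] unfolding H_def B_def by simp
qed

lemma halving_line_halves_complement:
  assumes fin: "finite P" and gp: "general_position P" and ev: "even (card P)"
    and A: "union_of_components P A" and a: "a \<in> A" "a' \<in> A" and hl: "halving_line P a a'"
  shows "real (card (left_side a a' (P - A))) = real (card (P - A)) / 2
       \<and> real (card (right_side a a' (P - A))) = real (card (P - A)) / 2"
proof -
  have "a \<in> P" "a' \<in> P" "a \<noteq> a'" using hl unfolding halving_line_def by auto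
  then have "card (left_side a a' (P - A)) + card (right_side a a' (P - A)) = card (P - A)"
    using fin gp a by (intro card_left_add_right_side) auto
  moreover have "card (left_side a a' (P - A)) = card (right_side a a' (P - A))"
    using halving_line_bisects_complement[OF assms] .
  ultimately show ?thesis by linarith
qed

theorem mainTheorem3:
  fixes P A B :: "point set"
  assumes "finite P"
    and "general_position P"
    and "even (card P)"
    and "P = A \<union> B" and "A \<inter> B = {}"
    and "union_of_components P A" and "union_of_components P B"
  shows "(\<forall>p\<in>A. \<forall>q\<in>A. halving_line P p q \<longrightarrow>
            real (card (left_side p q B)) = real (card B) / 2 \<and>
            real (card (right_side p q B)) = real (card B) / 2) \<and>
         (\<forall>p\<in>B. \<forall>q\<in>B. halving_line P p q \<longrightarrow>
            real (card (left_side p q A)) = real (card A) / 2 \<and>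
            real (card (right_side p q A)) = real (card A) / 2)"
proof -
  have "P - A = B" and "P - B = A" using assms(4,5) by auto
  then show ?thesis
    using halving_line_halves_complement[OF assms(1-3) assms(6)]
      halving_line_halves_complement[OF assms(1-3) assms(7)]
    by simp
qed

end
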